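(* Let $Q$ be a finite quiver without loops or oriented 2-cycles, with vertices labelled $1,\dots,n$, of which $1,\dots,m$ are mutable. Then the cluster algebra associated to $Q$ can be quantized: there exists a quiver $Q'$ containing $Q$ as a full subquiver, whose principal part (full subquiver on the mutable vertices) coincides with that of $Q$, together with a skew-symmetric integer matrix $\Lambda$ compatible with $Q'$.
   Context: For a quiver with vertices $1,\dots,N$ of which $1,\dots,m$ are mutable and the rest frozen, let $a_{ij}$ be the number of arrows from $i$ to $j$ and $\tilde B$ the $N\times m$ matrix with $b_{ij}=a_{ji}-a_{ij}$. A skew-symmetric $N\times N$ integer matrix $\Lambda$ is compatible with the quiver if $\tilde B^T\Lambda=\tilde I$, where $\tilde I$ is the $m\times N$ matrix whose first $m$ columns form the identity $I_m$ and whose other columns are zero. In $Q'$ the added vertices are frozen. *)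

theory Defs
  imports Main
begin

text \<open>A quiver on vertices 1..N is given by arrow counts a i j (number of arrows i to j);
  values outside 1..N are irrelevant.\<close>

definition no_loops_no_2cycles :: "nat \<Rightarrow> (nat \<Rightarrow> nat \<Rightarrow> nat) \<Rightarrow> bool" where
  "no_loops_no_2cycles N a \<longleftrightarrow>
     (\<forall>i\<in>{1..N}. a i i = 0) \<and> (\<forall>i\<in>{1..N}. \<forall>j\<in>{1..N}. a i j = 0 \<or> a j i = 0)"

definition bmat :: "(nat \<Rightarrow> nat \<Rightarrow> nat) \<Rightarrow> nat \<Rightarrow> nat \<Rightarrow> int" where
  "bmat a i j = int (a j i) - int (a i j)"

definition skew_symmetric_on :: "nat \<Rightarrow> (nat \<Rightarrow> nat \<Rightarrow> int) \<Rightarrow> bool" where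
  "skew_symmetric_on N L \<longleftrightarrow> (\<forall>i\<in>{1..N}. \<forall>j\<in>{1..N}. L j i = - L i j)"

text \<open>Compatibility: B~^T Lambda = I~ where B~ is the N x m matrix and I~ the m x N matrix
  (identity in the first m columns, zero elsewhere).\<close>
definition compatible :: "nat \<Rightarrow> nat \<Rightarrow> (nat \<Rightarrow> nat \<Rightarrow> nat) \<Rightarrow> (nat \<Rightarrow> nat \<Rightarrow> int) \<Rightarrow> bool" where
  "compatible N m a L \<longleftrightarrow> skew_symmetric_on N L \<and>
     (\<forall>j\<in>{1..m}. \<forall>k\<in>{1..N}.
        (\<Sum>i=1..N. bmat a i j * L i k) = (if k \<le> m \<and> k = j then 1 else 0))"

end

theory Submission
  imports Defs
begin

text \<open>Attach to every mutable vertex \<open>j\<close> a new frozen vertex \<open>n + j\<close> with a single arrow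
  \<open>n + j \<rightarrow> j\<close>. The mutable columns of the extended exchange matrix then acquire a block \<open>-I\<^sub>m\<close>
  below \<open>B\<close>, and the skew-symmetric matrix with blocks \<open>0\<close>, \<open>E\<close> in the first \<open>n\<close> rows and
  \<open>-E\<^sup>T\<close>, \<open>-B\<^sub>m\<^sub>m\<close> in the last \<open>m\<close> rows (\<open>E\<close> the \<open>n \<times> m\<close> matrix with ones on the diagonal,
  \<open>B\<^sub>m\<^sub>m\<close> the principal part) is compatible: in column \<open>j\<close> the \<open>-I\<^sub>m\<close> block produces the
  identity against the first \<open>n\<close> columns of \<open>\<Lambda>\<close>, and against the last \<open>m\<close> columns the
  contributions of \<open>B\<close> and of \<open>-I\<^sub>m\<close> cancel.\<close>

definition framed_quiver :: "nat \<Rightarrow> nat \<Rightarrow> (nat \<Rightarrow> nat \<Rightarrow> nat) \<Rightarrow> nat \<Rightarrow> nat \<Rightarrow> nat" where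
  "framed_quiver n m a i j =
     (if i \<le> n \<and> j \<le> n then a i j
      else if n < i \<and> i \<le> n + m \<and> j = i - n then 1 else 0)"

definition framed_Lambda :: "nat \<Rightarrow> (nat \<Rightarrow> nat \<Rightarrow> nat) \<Rightarrow> nat \<Rightarrow> nat \<Rightarrow> int" where
  "framed_Lambda n a i k =
     (if i \<le> n \<and> k \<le> n then 0
      else if i \<le> n then (if k = n + i then 1 else 0)
      else if k \<le> n then (if i = n + k then -1 else 0)
      else - bmat a (i - n) (k - n))"

lemma framed_quiver_restrict:
  "i \<le> n \<Longrightarrow> j \<le> n \<Longrightarrow> framed_quiver n m a i j = a i j"
  by (simp add: framed_quiver_def)

lemma no_loops_no_2cycles_framed_quiver:
  assumes "no_loops_no_2cycles n a" "m \<le> n"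
  shows "no_loops_no_2cycles (n + m) (framed_quiver n m a)"
  using assms unfolding no_loops_no_2cycles_def framed_quiver_def by auto

lemma skew_symmetric_framed_Lambda: "skew_symmetric_on N (framed_Lambda n a)"
  unfolding skew_symmetric_on_def framed_Lambda_def bmat_def by auto

lemma bmat_framed_quiver_old:
  "i \<le> n \<Longrightarrow> j \<le> n \<Longrightarrow> bmat (framed_quiver n m a) i j = bmat a i j"
  by (simp add: bmat_def framed_quiver_def)

lemma bmat_framed_quiver_new:
  assumes "n < i" "j \<in> {1..m}" "m \<le> n"
  shows "bmat (framed_quiver n m a) i j = (if i = n + j then -1 else 0)"
  using assms by (auto simp: bmat_def framed_quiver_def)

lemma framed_column_product:
  assumes "j \<in> {1..m}" "m \<le> n"
  shows "(\<Sum>i=1..n+m. bmat (framed_quiver n m a) i j * L i k)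
           = (\<Sum>i=1..n. bmat a i j * L i k) - L (n + j) k"
proof -
  let ?b' = "bmat (framed_quiver n m a)"
  have "(\<Sum>i=1..n+m. ?b' i j * L i k) = (\<Sum>i=1..n. ?b' i j * L i k) + (\<Sum>i=n+1..n+m. ?b' i j * L i k)"
    by (rule sum.ub_add_nat) simp
  also have "(\<Sum>i=1..n. ?b' i j * L i k) = (\<Sum>i=1..n. bmat a i j * L i k)"
    using assms by (intro sum.cong) (auto simp: bmat_framed_quiver_old)
  also have "(\<Sum>i=n+1..n+m. ?b' i j * L i k) = (\<Sum>i=n+1..n+m. if i = n + j then - L i k else 0)"
    using assms by (intro sum.cong) (auto simp: bmat_framed_quiver_new)
  also have "\<dots> = - L (n + j) k"
    using assms by simp
  finally show ?thesis by simp
qed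

lemma compatible_framed:
  assumes "m \<le> n"
  shows "compatible (n + m) m (framed_quiver n m a) (framed_Lambda n a)"
  unfolding compatible_def
proof (intro conjI skew_symmetric_framed_Lambda ballI)
  fix j k assume j: "j \<in> {1..m}" and k: "k \<in> {1..n+m}"
  let ?L = "framed_Lambda n a"
  show "(\<Sum>i=1..n+m. bmat (framed_quiver n m a) i j * ?L i k) = (if k \<le> m \<and> k = j then 1 else 0)"
  proof (cases "k \<le> n")
    case True
    have "(\<Sum>i=1..n. bmat a i j * ?L i k) = 0"
      using True by (intro sum.neutral) (simp add: framed_Lambda_def)
    with True j show ?thesis
      unfolding framed_column_product[OF j assms] by (simp add: framed_Lambda_def)
  next
    case False
    define p where "p = k - n"
    have p: "k = n + p" "p \<in> {1..m}"
      using False k by (auto simp: p_def)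
    have "(\<Sum>i=1..n. bmat a i j * ?L i k) = (\<Sum>i=1..n. if i = p then bmat a p j else 0)"
      using p by (intro sum.cong) (auto simp: framed_Lambda_def)
    also have "\<dots> = bmat a p j"
      using p assms by simp
    finally show ?thesis
      using p j assms unfolding framed_column_product[OF j assms] by (simp add: framed_Lambda_def bmat_def)
  qed
qed

theorem lemma4p4:
  fixes n m :: nat and a :: "nat \<Rightarrow> nat \<Rightarrow> nat"
  assumes "m \<le> n"
    and "no_loops_no_2cycles n a"
  shows "\<exists>N' a' L. n \<le> N' \<and> no_loops_no_2cycles N' a'
           \<and> (\<forall>i\<in>{1..n}. \<forall>j\<in>{1..n}. a' i j = a i j)
           \<and> compatible N' m a' L"
proof (intro exI conjI)
  show "n \<le> n + m" by simp
  show "no_loops_no_2cycles (n + m) (framed_quiver n m a)"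
    using assms(2,1) by (rule no_loops_no_2cycles_framed_quiver)
  show "\<forall>i\<in>{1..n}. \<forall>j\<in>{1..n}. framed_quiver n m a i j = a i j"
    by (simp add: framed_quiver_restrict)
  show "compatible (n + m) m (framed_quiver n m a) (framed_Lambda n a)"
    using assms(1) by (rule compatible_framed)
qed

end
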